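(* Let $\Gamma$ be a geometry of type $C_3$ in which two distinct coplanar lines through a common point lie in a unique common plane. Let $\alpha=(p,L,q,M,p)$ be a non-degenerate primitive path, $N$ a line admissible for $\alpha$, and $r$ a point of $N$. Then: (1) $\sigma^N_{q\to r}(\alpha)=\alpha$ if and only if $r=q$; (2) $\sigma^N_{q\to r}(\alpha)$ is a non-degenerate primitive path and $N$ is admissible for it; (3) $\sigma^N_{r\to q}(\sigma^N_{q\to r}(\alpha))=\alpha$; (4) $\alpha\sim\sigma^N_{q\to r}(\alpha)$.
   Context: A geometry of type $C_3$ is a (residually connected) rank-3 Tits geometry belonging to the diagram $\circ\!-\!\circ\!=\!\circ$, with types points, lines, planes; the residue of a plane is a projective plane on its points and lines. Paths, homotopy $\sim$: generated by $(x,y,x)\leftrightarrow(x)$ and $(x,y,z)\leftrightarrow(x,z)$ for flags $\{x,y,z\}$. A primitive path is a closed path $(p,L,q,M,p)$ with $p,q$ points and $L,M$ lines; degenerate if $p=q$ or $L=M$. Shift: given a non-degenerate primitive path $\alpha=(p,L,q,M,p)$ (so $L,M$ are not coplanar), a line $N$ is admissible for $\alpha$ if $N$ is incident with $q$ and is coplanar with $L$ and with $M$. For a point $r$ on $N$, let $\xi$ be the plane on $N$ and $L$, $\chi$ the plane on $N$ and $M$, $L'$ the line of $\xi$ through $p$ and $r$, $M'$ the line of $\chi$ through $p$ and $r$; the shift of $\alpha$ from $q$ to $r$ along $N$ is $\sigma^N_{q\to r}(\alpha)=(p,L',r,M',p)$. *)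

theory Defs
  imports Main
begin

datatype eltype = Point | Line | Plane

definition incidence_geometry :: "('e \<Rightarrow> eltype) \<Rightarrow> ('e \<Rightarrow> 'e \<Rightarrow> bool) \<Rightarrow> bool" where
  "incidence_geometry tp I \<longleftrightarrow>
     (\<forall>x. I x x) \<and> (\<forall>x y. I x y \<longrightarrow> I y x) \<and>
     (\<forall>x y. I x y \<and> tp x = tp y \<longrightarrow> x = y) \<and>
     (\<forall>t. \<exists>x. tp x = t)"

definition is_flag :: "('e \<Rightarrow> 'e \<Rightarrow> bool) \<Rightarrow> 'e set \<Rightarrow> bool" where
  "is_flag I F \<longleftrightarrow> (\<forall>x\<in>F. \<forall>y\<in>F. I x y)"

definition residue :: "('e \<Rightarrow> eltype) \<Rightarrow> ('e \<Rightarrow> 'e \<Rightarrow> bool) \<Rightarrow> 'e set \<Rightarrow> 'e set" where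
  "residue tp I F = {x. tp x \<notin> tp ` F \<and> (\<forall>y\<in>F. I x y)}"

definition adj :: "('e \<Rightarrow> 'e \<Rightarrow> bool) \<Rightarrow> 'e \<Rightarrow> 'e \<Rightarrow> bool" where
  "adj I x y \<longleftrightarrow> I x y \<and> x \<noteq> y"

definition walk_in :: "('e \<Rightarrow> 'e \<Rightarrow> bool) \<Rightarrow> 'e set \<Rightarrow> 'e list \<Rightarrow> bool" where
  "walk_in I V xs \<longleftrightarrow> xs \<noteq> [] \<and> set xs \<subseteq> V \<and>
     (\<forall>i. Suc i < length xs \<longrightarrow> adj I (xs ! i) (xs ! Suc i))"

definition connected_in :: "('e \<Rightarrow> 'e \<Rightarrow> bool) \<Rightarrow> 'e set \<Rightarrow> bool" where
  "connected_in I V \<longleftrightarrow>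
     (\<forall>x\<in>V. \<forall>y\<in>V. \<exists>xs. walk_in I V xs \<and> hd xs = x \<and> last xs = y)"

definition cycle_in :: "('e \<Rightarrow> 'e \<Rightarrow> bool) \<Rightarrow> 'e set \<Rightarrow> 'e list \<Rightarrow> bool" where
  "cycle_in I V xs \<longleftrightarrow> walk_in I V xs \<and> distinct xs \<and> length xs \<ge> 3 \<and>
     adj I (last xs) (hd xs)"

text \<open>Generalized n-gon (in the sense of Tits): the incidence graph has diameter at most n,
has no cycle of length less than 2n, and is firm (every vertex has at least two neighbours).\<close>
definition generalized_ngon :: "nat \<Rightarrow> ('e \<Rightarrow> 'e \<Rightarrow> bool) \<Rightarrow> 'e set \<Rightarrow> bool" where
  "generalized_ngon n I V \<longleftrightarrow>
     (\<forall>x\<in>V. \<forall>y\<in>V. \<exists>xs. walk_in I V xs \<and> hd xs = x \<and> last xs = y \<and> length xs \<le> n + 1) \<and>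
     (\<forall>xs. cycle_in I V xs \<longrightarrow> length xs \<ge> 2 * n) \<and>
     (\<forall>x\<in>V. \<exists>y z. y \<in> V \<and> z \<in> V \<and> y \<noteq> z \<and> adj I x y \<and> adj I x z)"

definition projective_plane :: "('e \<Rightarrow> 'e \<Rightarrow> bool) \<Rightarrow> 'e set \<Rightarrow> 'e set \<Rightarrow> bool" where
  "projective_plane I P Ls \<longleftrightarrow>
     (\<forall>a\<in>P. \<forall>b\<in>P. a \<noteq> b \<longrightarrow> (\<exists>!l. l \<in> Ls \<and> I a l \<and> I b l)) \<and>
     (\<forall>l\<in>Ls. \<forall>m\<in>Ls. l \<noteq> m \<longrightarrow> (\<exists>!a. a \<in> P \<and> I a l \<and> I a m)) \<and>
     (\<exists>a b c d. {a, b, c, d} \<subseteq> P \<and> card {a, b, c, d} = 4 \<and>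
        (\<forall>x\<in>{a, b, c, d}. \<forall>y\<in>{a, b, c, d}. \<forall>z\<in>{a, b, c, d}.
           card {x, y, z} = 3 \<longrightarrow> \<not> (\<exists>l\<in>Ls. I x l \<and> I y l \<and> I z l)))"

definition residually_connected :: "('e \<Rightarrow> eltype) \<Rightarrow> ('e \<Rightarrow> 'e \<Rightarrow> bool) \<Rightarrow> bool" where
  "residually_connected tp I \<longleftrightarrow>
     (\<forall>F. is_flag I F \<and> finite F \<and> card (tp ` F) \<le> 1 \<longrightarrow> connected_in I (residue tp I F)) \<and>
     (\<forall>F. is_flag I F \<and> finite F \<and> card (tp ` F) = 2 \<longrightarrow> residue tp I F \<noteq> {})"

definition C3_geometry :: "('e \<Rightarrow> eltype) \<Rightarrow> ('e \<Rightarrow> 'e \<Rightarrow> bool) \<Rightarrow> bool" where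
  "C3_geometry tp I \<longleftrightarrow>
     incidence_geometry tp I \<and> residually_connected tp I \<and>
     (\<forall>\<xi>. tp \<xi> = Plane \<longrightarrow>
        projective_plane I {x. tp x = Point \<and> I x \<xi>} {x. tp x = Line \<and> I x \<xi>}) \<and>
     (\<forall>p. tp p = Point \<longrightarrow> generalized_ngon 4 I (residue tp I {p})) \<and>
     (\<forall>L. tp L = Line \<longrightarrow>
        (\<exists>x. tp x = Point \<and> I x L) \<and> (\<exists>x. tp x = Plane \<and> I x L) \<and>
        (\<forall>x y. tp x = Point \<and> I x L \<and> tp y = Plane \<and> I y L \<longrightarrow> I x y))"

definition coplanar :: "('e \<Rightarrow> eltype) \<Rightarrow> ('e \<Rightarrow> 'e \<Rightarrow> bool) \<Rightarrow> 'e \<Rightarrow> 'e \<Rightarrow> bool" where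
  "coplanar tp I L M \<longleftrightarrow> (\<exists>\<xi>. tp \<xi> = Plane \<and> I L \<xi> \<and> I M \<xi>)"

definition unique_common_plane :: "('e \<Rightarrow> eltype) \<Rightarrow> ('e \<Rightarrow> 'e \<Rightarrow> bool) \<Rightarrow> bool" where
  "unique_common_plane tp I \<longleftrightarrow>
     (\<forall>p L M. tp p = Point \<and> tp L = Line \<and> tp M = Line \<and> L \<noteq> M \<and> I p L \<and> I p M \<and>
        coplanar tp I L M \<longrightarrow> (\<exists>!\<xi>. tp \<xi> = Plane \<and> I L \<xi> \<and> I M \<xi>))"

definition is_path :: "('e \<Rightarrow> 'e \<Rightarrow> bool) \<Rightarrow> 'e list \<Rightarrow> bool" where
  "is_path I xs \<longleftrightarrow> xs \<noteq> [] \<and> (\<forall>i. Suc i < length xs \<longrightarrow> I (xs ! i) (xs ! Suc i))"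

inductive elem_homotopy :: "('e \<Rightarrow> 'e \<Rightarrow> bool) \<Rightarrow> 'e list \<Rightarrow> 'e list \<Rightarrow> bool" for I where
  hom_back: "I x y \<Longrightarrow> elem_homotopy I (xs @ [x, y, x] @ ys) (xs @ [x] @ ys)"
| hom_flag: "is_flag I {x, y, z} \<Longrightarrow> elem_homotopy I (xs @ [x, y, z] @ ys) (xs @ [x, z] @ ys)"

definition homotopic :: "('e \<Rightarrow> 'e \<Rightarrow> bool) \<Rightarrow> 'e list \<Rightarrow> 'e list \<Rightarrow> bool" where
  "homotopic I = (symclp (elem_homotopy I))\<^sup>*\<^sup>*"

definition primitive_path :: "('e \<Rightarrow> eltype) \<Rightarrow> ('e \<Rightarrow> 'e \<Rightarrow> bool) \<Rightarrow> 'e list \<Rightarrow> bool" where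
  "primitive_path tp I \<alpha> \<longleftrightarrow> length \<alpha> = 5 \<and> \<alpha> ! 4 = \<alpha> ! 0 \<and> is_path I \<alpha> \<and>
     tp (\<alpha> ! 0) = Point \<and> tp (\<alpha> ! 1) = Line \<and> tp (\<alpha> ! 2) = Point \<and> tp (\<alpha> ! 3) = Line"

definition nondegenerate :: "'e list \<Rightarrow> bool" where
  "nondegenerate \<alpha> \<longleftrightarrow> \<alpha> ! 0 \<noteq> \<alpha> ! 2 \<and> \<alpha> ! 1 \<noteq> \<alpha> ! 3"

definition admissible :: "('e \<Rightarrow> eltype) \<Rightarrow> ('e \<Rightarrow> 'e \<Rightarrow> bool) \<Rightarrow> 'e \<Rightarrow> 'e list \<Rightarrow> bool" where
  "admissible tp I N \<alpha> \<longleftrightarrow> tp N = Line \<and> I N (\<alpha> ! 2) \<and>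
     coplanar tp I N (\<alpha> ! 1) \<and> coplanar tp I N (\<alpha> ! 3)"

definition plane_on :: "('e \<Rightarrow> eltype) \<Rightarrow> ('e \<Rightarrow> 'e \<Rightarrow> bool) \<Rightarrow> 'e \<Rightarrow> 'e \<Rightarrow> 'e" where
  "plane_on tp I L M = (THE \<xi>. tp \<xi> = Plane \<and> I L \<xi> \<and> I M \<xi>)"

definition line_through :: "('e \<Rightarrow> eltype) \<Rightarrow> ('e \<Rightarrow> 'e \<Rightarrow> bool) \<Rightarrow> 'e \<Rightarrow> 'e \<Rightarrow> 'e \<Rightarrow> 'e" where
  "line_through tp I \<xi> a b = (THE l. tp l = Line \<and> I l \<xi> \<and> I a l \<and> I b l)"

text \<open>Shift of alpha = (p,L,q,M,p) from q to r along N: (p,L',r,M',p).\<close>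
definition shift :: "('e \<Rightarrow> eltype) \<Rightarrow> ('e \<Rightarrow> 'e \<Rightarrow> bool) \<Rightarrow> 'e \<Rightarrow> 'e \<Rightarrow> 'e list \<Rightarrow> 'e list" where
  "shift tp I N r \<alpha> =
     (let p = \<alpha> ! 0; L = \<alpha> ! 1; M = \<alpha> ! 3;
          \<xi> = plane_on tp I N L; \<chi> = plane_on tp I N M
      in [p, line_through tp I \<xi> p r, r, line_through tp I \<chi> p r, p])"

end

theory Submission
  imports Defs
begin

text \<open>Let \<xi> and \<chi> be the planes on N, L and on N, M. As L and M share the two points p and q
they are not coplanar, so \<xi> \<noteq> \<chi> and p does not lie on N. Every point r of N lies in both
planes, and the shift replaces L and M by the lines joining p and r in \<xi> and in \<chi>. These new
lines span the same planes \<xi> and \<chi> with N, so a shifted path is shifted exactly like the original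
one, and shifting to q recovers L and M by uniqueness of joining lines. For the homotopy, flag
moves slide every such path onto (p, \<xi>, N, \<chi>, p), which depends only on p, N and the planes.\<close>

lemma is_path_singleton: "is_path I [x]"
  by (simp add: is_path_def)

lemma is_path_Cons_Cons: "is_path I (x # y # xs) \<longleftrightarrow> I x y \<and> is_path I (y # xs)"
  unfolding is_path_def by (simp add: All_less_Suc2)

lemma primitive_path_iff:
  "primitive_path tp I [p, L, q, M, p'] \<longleftrightarrow> p' = p \<and>
     tp p = Point \<and> tp L = Line \<and> tp q = Point \<and> tp M = Line \<and>
     I p L \<and> I L q \<and> I q M \<and> I M p"
  by (auto simp: primitive_path_def is_path_Cons_Cons is_path_singleton)

lemma primitive_pathE:
  assumes "primitive_path tp I \<alpha>"
  obtains p L q M where "\<alpha> = [p, L, q, M, p]"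
  using assms unfolding primitive_path_def
  by (cases \<alpha> rule: list.exhaust) (auto simp: length_Suc_conv numeral_eq_Suc)

lemma equivp_homotopic: "equivp (homotopic I)"
  by (simp add: homotopic_def)

lemma homotopic_sym: "homotopic I \<alpha> \<beta> \<Longrightarrow> homotopic I \<beta> \<alpha>"
  by (rule equivp_symp[OF equivp_homotopic])

lemma homotopic_trans [trans]: "homotopic I \<alpha> \<beta> \<Longrightarrow> homotopic I \<beta> \<gamma> \<Longrightarrow> homotopic I \<alpha> \<gamma>"
  by (rule equivp_transp[OF equivp_homotopic])

lemma homotopic_if_elem_homotopy: "elem_homotopy I \<alpha> \<beta> \<Longrightarrow> homotopic I \<alpha> \<beta>"
  by (simp add: homotopic_def r_into_rtranclp)

locale C3 =
  fixes tp :: "'e \<Rightarrow> eltype" and I :: "'e \<Rightarrow> 'e \<Rightarrow> bool"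
  assumes C3_geometry: "C3_geometry tp I"
begin

lemma incident_refl: "I x x"
  using C3_geometry by (simp add: C3_geometry_def incidence_geometry_def)

lemma incident_sym: "I x y \<Longrightarrow> I y x"
  using C3_geometry by (simp add: C3_geometry_def incidence_geometry_def)

lemma point_on_plane_of_line:
  "tp x = Point \<Longrightarrow> tp l = Line \<Longrightarrow> tp \<xi> = Plane \<Longrightarrow> I x l \<Longrightarrow> I l \<xi> \<Longrightarrow> I x \<xi>"
  using C3_geometry incident_sym unfolding C3_geometry_def by blast

lemma line_in_plane_ex1:
  assumes "tp \<xi> = Plane" "tp a = Point" "tp b = Point" "I a \<xi>" "I b \<xi>" "a \<noteq> b"
  shows "\<exists>!l. tp l = Line \<and> I l \<xi> \<and> I a l \<and> I b l"
proof -
  have "projective_plane I {x. tp x = Point \<and> I x \<xi>} {x. tp x = Line \<and> I x \<xi>}"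
    using C3_geometry assms(1) by (simp add: C3_geometry_def)
  then show ?thesis
    using assms(2-) unfolding projective_plane_def by simp
qed

lemma line_through_spec:
  assumes "tp \<xi> = Plane" "tp a = Point" "tp b = Point" "I a \<xi>" "I b \<xi>" "a \<noteq> b"
  shows "tp (line_through tp I \<xi> a b) = Line" "I (line_through tp I \<xi> a b) \<xi>"
    "I a (line_through tp I \<xi> a b)" "I b (line_through tp I \<xi> a b)"
  using theI'[OF line_in_plane_ex1[OF assms]] by (simp_all add: line_through_def)

lemma line_through_unique:
  assumes "tp \<xi> = Plane" "tp a = Point" "tp b = Point" "I a \<xi>" "I b \<xi>" "a \<noteq> b"
    and "tp l = Line" "I l \<xi>" "I a l" "I b l"
  shows "line_through tp I \<xi> a b = l"
  unfolding line_through_def using line_in_plane_ex1[OF assms(1-6)] assms(7-)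
  by (blast intro: the1_equality)

lemma lines_not_coplanar:
  assumes "tp a = Point" "tp b = Point" "a \<noteq> b" "tp l = Line" "tp m = Line" "l \<noteq> m"
    and "I a l" "I b l" "I a m" "I b m"
  shows "\<not> coplanar tp I l m"
proof
  assume "coplanar tp I l m"
  then obtain \<eta> where \<eta>: "tp \<eta> = Plane" "I l \<eta>" "I m \<eta>"
    unfolding coplanar_def by blast
  have "I a \<eta>" "I b \<eta>"
    using \<eta> assms point_on_plane_of_line by blast+
  then show False
    using line_through_unique[OF \<eta>(1) assms(1-2) _ _ \<open>a \<noteq> b\<close>] \<eta> assms(4-) by metis
qed

lemma plane_on_unique:
  assumes "unique_common_plane tp I"
    and "tp x = Point" "tp l = Line" "tp m = Line" "l \<noteq> m" "I x l" "I x m"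
    and "tp \<xi> = Plane" "I l \<xi>" "I m \<xi>"
  shows "plane_on tp I l m = \<xi>"
proof -
  have "\<exists>!\<xi>. tp \<xi> = Plane \<and> I l \<xi> \<and> I m \<xi>"
    using assms unfolding unique_common_plane_def coplanar_def by blast
  then show ?thesis
    unfolding plane_on_def using assms(8-) by (blast intro: the1_equality)
qed

lemma homotopic_contract_flag:
  assumes "I x y" "I y z" "I x z"
  shows "homotopic I (xs @ x # y # z # ys) (xs @ x # z # ys)"
proof -
  have "is_flag I {x, y, z}"
    using assms incident_refl incident_sym unfolding is_flag_def by blast
  then show ?thesis
    using homotopic_if_elem_homotopy elem_homotopy.hom_flag by fastforce
qed

lemma homotopic_expand_flag:
  "I x y \<Longrightarrow> I y z \<Longrightarrow> I x z \<Longrightarrow> homotopic I (xs @ x # z # ys) (xs @ x # y # z # ys)"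
  by (rule homotopic_sym, rule homotopic_contract_flag)

end

locale admissible_primitive_path = C3 +
  fixes p L q M N :: 'e
  assumes unique_plane: "unique_common_plane tp I"
    and primitive: "primitive_path tp I [p, L, q, M, p]"
    and nondeg: "nondegenerate [p, L, q, M, p]"
    and adm: "admissible tp I N [p, L, q, M, p]"
begin

abbreviation \<xi> :: 'e where "\<xi> \<equiv> plane_on tp I N L"
abbreviation \<chi> :: 'e where "\<chi> \<equiv> plane_on tp I N M"

lemma path_types: "tp p = Point" "tp L = Line" "tp q = Point" "tp M = Line"
  using primitive by (simp_all add: primitive_path_iff)

lemma path_incidences: "I p L" "I q L" "I p M" "I q M"
  using primitive incident_sym by (simp_all add: primitive_path_iff)

lemma p_neq_q: "p \<noteq> q" and L_neq_M: "L \<noteq> M"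
  using nondeg by (simp_all add: nondegenerate_def)

lemma N_line: "tp N = Line" and q_on_N: "I q N"
  using adm incident_sym by (simp_all add: admissible_def)

lemma L_M_not_coplanar: "\<not> coplanar tp I L M"
  using lines_not_coplanar[OF path_types(1,3) p_neq_q path_types(2,4) L_neq_M path_incidences] .

lemma planes_on_N:
  "tp \<xi> = Plane" "I N \<xi>" "I L \<xi>" "tp \<chi> = Plane" "I N \<chi>" "I M \<chi>"
proof -
  obtain \<eta> where \<eta>: "tp \<eta> = Plane" "I N \<eta>" "I L \<eta>"
    using adm unfolding admissible_def coplanar_def by auto
  obtain \<theta> where \<theta>: "tp \<theta> = Plane" "I N \<theta>" "I M \<theta>"
    using adm unfolding admissible_def coplanar_def by auto
  have "N \<noteq> L" "N \<noteq> M"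
    using \<eta> \<theta> L_M_not_coplanar unfolding coplanar_def by auto
  then have "\<xi> = \<eta>" "\<chi> = \<theta>"
    using plane_on_unique[OF unique_plane path_types(3) N_line] \<eta> \<theta>
      q_on_N path_types path_incidences by simp_all
  then show "tp \<xi> = Plane" "I N \<xi>" "I L \<xi>" "tp \<chi> = Plane" "I N \<chi>" "I M \<chi>"
    using \<eta> \<theta> by simp_all
qed

lemma path_points_in_planes: "I p \<xi>" "I q \<xi>" "I p \<chi>" "I q \<chi>"
  using point_on_plane_of_line path_types path_incidences planes_on_N by blast+

lemma p_not_on_N: "\<not> I p N"
proof
  assume "I p N"
  then have "N = L"
    using line_through_unique[OF planes_on_N(1) path_types(1,3) path_points_in_planes(1,2)
        p_neq_q] N_line q_on_N path_types(2) path_incidences(1,2) planes_on_N(2,3) by metis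
  then show False
    using adm L_M_not_coplanar by (simp add: admissible_def)
qed

lemma point_on_N:
  assumes "tp r = Point" "I r N"
  shows "p \<noteq> r" "I r \<xi>" "I r \<chi>"
  using assms p_not_on_N point_on_plane_of_line N_line planes_on_N by auto

lemma shift_eq:
  "shift tp I N r [p, L, q, M, p] = [p, line_through tp I \<xi> p r, r, line_through tp I \<chi> p r, p]"
  by (simp add: shift_def)

lemma shift_at_q: "shift tp I N q [p, L, q, M, p] = [p, L, q, M, p]"
  using line_through_unique path_types path_incidences path_points_in_planes planes_on_N p_neq_q
  by (simp add: shift_eq)

lemma plane_on_shifted_lines:
  assumes "tp r = Point" "I r N"
  shows "plane_on tp I N (line_through tp I \<xi> p r) = \<xi>"
    and "plane_on tp I N (line_through tp I \<chi> p r) = \<chi>"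
proof -
  have "I p (line_through tp I \<xi> p r)" "I p (line_through tp I \<chi> p r)"
    using line_through_spec planes_on_N path_types(1) assms path_points_in_planes point_on_N[OF assms]
    by auto
  then have "N \<noteq> line_through tp I \<xi> p r" "N \<noteq> line_through tp I \<chi> p r"
    using p_not_on_N by auto
  then show "plane_on tp I N (line_through tp I \<xi> p r) = \<xi>"
    and "plane_on tp I N (line_through tp I \<chi> p r) = \<chi>"
    using plane_on_unique[OF unique_plane assms(1) N_line] line_through_spec planes_on_N
      path_types(1) assms path_points_in_planes point_on_N[OF assms] by simp_all
qed

lemma shift_admissible_primitive_path:
  assumes "tp r = Point" "I r N"
  shows "admissible_primitive_path tp I p (line_through tp I \<xi> p r) r (line_through tp I \<chi> p r) N"
proof -
  let ?L' = "line_through tp I \<xi> p r" and ?M' = "line_through tp I \<chi> p r"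
  have L': "tp ?L' = Line" "I ?L' \<xi>" "I p ?L'" "I r ?L'"
    and M': "tp ?M' = Line" "I ?M' \<chi>" "I p ?M'" "I r ?M'"
    using line_through_spec planes_on_N path_types(1) assms path_points_in_planes point_on_N[OF assms]
    by auto
  have "\<xi> \<noteq> \<chi>"
    using L_M_not_coplanar planes_on_N unfolding coplanar_def by metis
  then have "?L' \<noteq> ?M'"
    using plane_on_shifted_lines[OF assms] by metis
  moreover have "coplanar tp I N ?L'" "coplanar tp I N ?M'"
    using L' M' planes_on_N unfolding coplanar_def by auto
  ultimately show ?thesis
    using C3_geometry unique_plane L' M' assms path_types(1) point_on_N[OF assms] N_line
      incident_sym by unfold_locales (simp_all add: primitive_path_iff nondegenerate_def admissible_def)
qed

lemma shift_shift:
  assumes "tp r = Point" "I r N"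
  shows "shift tp I N s (shift tp I N r [p, L, q, M, p]) = shift tp I N s [p, L, q, M, p]"
  using plane_on_shifted_lines[OF assms] by (simp add: shift_def)

lemma homotopic_to_planes: "homotopic I [p, L, q, M, p] [p, \<xi>, N, \<chi>, p]"
proof -
  note inc = planes_on_N(2,3,5,6) path_points_in_planes path_incidences q_on_N
  note inc' = inc[THEN incident_sym]
  have "homotopic I [p, L, q, M, p] [p, L, \<xi>, q, M, p]"
    using homotopic_expand_flag[of L \<xi> q "[p]" "[M, p]"] inc inc' by simp
  also have "homotopic I \<dots> [p, \<xi>, q, M, p]"
    using homotopic_contract_flag[of p L \<xi> "[]" "[q, M, p]"] inc inc' by simp
  also have "homotopic I \<dots> [p, \<xi>, q, \<chi>, M, p]"
    using homotopic_expand_flag[of q \<chi> M "[p, \<xi>]" "[p]"] inc inc' by simp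
  also have "homotopic I \<dots> [p, \<xi>, q, \<chi>, p]"
    using homotopic_contract_flag[of \<chi> M p "[p, \<xi>, q]" "[]"] inc inc' by simp
  also have "homotopic I \<dots> [p, \<xi>, q, N, \<chi>, p]"
    using homotopic_expand_flag[of q N \<chi> "[p, \<xi>]" "[p]"] inc inc' by simp
  also have "homotopic I \<dots> [p, \<xi>, N, \<chi>, p]"
    using homotopic_contract_flag[of \<xi> q N "[p]" "[\<chi>, p]"] inc inc' by simp
  finally show ?thesis .
qed

lemma homotopic_shift:
  assumes "tp r = Point" "I r N"
  shows "homotopic I [p, L, q, M, p] (shift tp I N r [p, L, q, M, p])"
proof -
  interpret shifted: admissible_primitive_path tp I p
      "line_through tp I \<xi> p r" r "line_through tp I \<chi> p r" N
    using shift_admissible_primitive_path[OF assms] .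
  have "homotopic I (shift tp I N r [p, L, q, M, p]) [p, \<xi>, N, \<chi>, p]"
    using shifted.homotopic_to_planes plane_on_shifted_lines[OF assms] by (simp add: shift_eq)
  then show ?thesis
    using homotopic_to_planes homotopic_sym homotopic_trans by blast
qed

end

theorem mainTheorem10:
  fixes tp :: "'e \<Rightarrow> eltype" and I :: "'e \<Rightarrow> 'e \<Rightarrow> bool"
    and \<alpha> :: "'e list" and N r :: 'e
  assumes "C3_geometry tp I"
    and "unique_common_plane tp I"
    and "primitive_path tp I \<alpha>" and "nondegenerate \<alpha>"
    and "admissible tp I N \<alpha>"
    and "tp r = Point" and "I r N"
  shows "(shift tp I N r \<alpha> = \<alpha> \<longleftrightarrow> r = \<alpha> ! 2)
    \<and> (primitive_path tp I (shift tp I N r \<alpha>) \<and> nondegenerate (shift tp I N r \<alpha>)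
        \<and> admissible tp I N (shift tp I N r \<alpha>))
    \<and> shift tp I N (\<alpha> ! 2) (shift tp I N r \<alpha>) = \<alpha>
    \<and> homotopic I \<alpha> (shift tp I N r \<alpha>)"
proof -
  obtain p L q M where \<alpha>: "\<alpha> = [p, L, q, M, p]"
    using assms(3) by (rule primitive_pathE)
  interpret admissible_primitive_path tp I p L q M N
    using assms unfolding \<alpha> by unfold_locales
  interpret shifted: admissible_primitive_path tp I p
      "line_through tp I \<xi> p r" r "line_through tp I \<chi> p r" N
    using shift_admissible_primitive_path[OF assms(6,7)] .
  have "shift tp I N r \<alpha> = \<alpha> \<longleftrightarrow> r = q"
    using shift_at_q by (auto simp: \<alpha> shift_eq)
  moreover have "shift tp I N q (shift tp I N r \<alpha>) = \<alpha>"
    using shift_shift[OF assms(6,7)] shift_at_q by (simp add: \<alpha>)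
  ultimately show ?thesis
    using shifted.primitive shifted.nondeg shifted.adm homotopic_shift[OF assms(6,7)]
    by (simp add: \<alpha> shift_eq)
qed

end
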